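(* Let $S,T$ be ordered trees, let $f\colon T\to S$ be a rigid surjection, and let $T'$ be a subtree of $T$. Then $f[T']$ is a subtree of $S$ and $f\upharpoonright T'\colon T'\to f[T']$ is a rigid surjection.
   Context: A tree is a finite, non-empty partially ordered set $(T,\sqsubseteq_T)$ with a smallest element (the root) such that the set of predecessors of each element is linearly ordered; each node counts as its own predecessor and successor. For $v,w\in T$, $v\wedge_T w$ is the $\sqsubseteq_T$-largest common predecessor. A tree is ordered if the set of immediate successors of each node carries a fixed linear order; this induces the lexicographic linear order $\leq_T$: $v\leq_T w$ if $v\sqsubseteq_T w$, and for incomparable $v,w$, $v\leq_T w$ iff the immediate successor of $v\wedge_T w$ below $v$ precedes the one below $w$. A subtree of $T$ is a non-empty subset closed downward under $\sqsubseteq_T$; it is an ordered tree with the inherited orders. A morphism $e\colon S\to T$ satisfies $e(v\wedge_S w)=e(v)\wedge_T e(w)$, is monotone from $\leq_S$ to $\leq_T$, and maps root to root. A function $f\colon T\to S$ is a rigid surjection if there is a morphism $e\colon S\to T$ with $f\circ e={\rm id}_S$ and $e(f(w))\sqsubseteq_T w$ for all $w\in T$. *)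

theory Defs
  imports Main
begin

text \<open>An ordered tree: a carrier set, the tree order (\<sqsubseteq>), and a relation
  giving the fixed linear order on the immediate successors of each node.\<close>

record 'a otree =
  carrier :: "'a set"
  tle :: "'a \<Rightarrow> 'a \<Rightarrow> bool"
  sib :: "'a \<Rightarrow> 'a \<Rightarrow> bool"

definition tlt :: "('a, 'm) otree_scheme \<Rightarrow> 'a \<Rightarrow> 'a \<Rightarrow> bool" where
  "tlt T v w \<longleftrightarrow> tle T v w \<and> v \<noteq> w"

definition is_tree :: "('a, 'm) otree_scheme \<Rightarrow> bool" where
  "is_tree T \<longleftrightarrow>
     finite (carrier T) \<and> carrier T \<noteq> {} \<and>
     (\<forall>v\<in>carrier T. tle T v v) \<and>
     (\<forall>u\<in>carrier T. \<forall>v\<in>carrier T. tle T u v \<and> tle T v u \<longrightarrow> u = v) \<and>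
     (\<forall>u\<in>carrier T. \<forall>v\<in>carrier T. \<forall>w\<in>carrier T.
        tle T u v \<and> tle T v w \<longrightarrow> tle T u w) \<and>
     (\<exists>r\<in>carrier T. \<forall>v\<in>carrier T. tle T r v) \<and>
     (\<forall>w\<in>carrier T. \<forall>u\<in>carrier T. \<forall>v\<in>carrier T.
        tle T u w \<and> tle T v w \<longrightarrow> tle T u v \<or> tle T v u)"

definition root :: "('a, 'm) otree_scheme \<Rightarrow> 'a" where
  "root T = (THE r. r \<in> carrier T \<and> (\<forall>v\<in>carrier T. tle T r v))"

definition imm_succ :: "('a, 'm) otree_scheme \<Rightarrow> 'a \<Rightarrow> 'a set" where
  "imm_succ T v = {w \<in> carrier T. tlt T v w \<and>
      \<not> (\<exists>u\<in>carrier T. tlt T v u \<and> tlt T u w)}"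

definition is_ordered_tree :: "('a, 'm) otree_scheme \<Rightarrow> bool" where
  "is_ordered_tree T \<longleftrightarrow> is_tree T \<and>
     (\<forall>v\<in>carrier T.
        (\<forall>a\<in>imm_succ T v. sib T a a) \<and>
        (\<forall>a\<in>imm_succ T v. \<forall>b\<in>imm_succ T v. sib T a b \<and> sib T b a \<longrightarrow> a = b) \<and>
        (\<forall>a\<in>imm_succ T v. \<forall>b\<in>imm_succ T v. \<forall>c\<in>imm_succ T v.
            sib T a b \<and> sib T b c \<longrightarrow> sib T a c) \<and>
        (\<forall>a\<in>imm_succ T v. \<forall>b\<in>imm_succ T v. sib T a b \<or> sib T b a))"

definition meet :: "('a, 'm) otree_scheme \<Rightarrow> 'a \<Rightarrow> 'a \<Rightarrow> 'a" where
  "meet T v w = (THE u. u \<in> carrier T \<and> tle T u v \<and> tle T u w \<and>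
      (\<forall>x\<in>carrier T. tle T x v \<and> tle T x w \<longrightarrow> tle T x u))"

definition succ_toward :: "('a, 'm) otree_scheme \<Rightarrow> 'a \<Rightarrow> 'a \<Rightarrow> 'a" where
  "succ_toward T m v = (THE c. c \<in> imm_succ T m \<and> tle T c v)"

definition lex :: "('a, 'm) otree_scheme \<Rightarrow> 'a \<Rightarrow> 'a \<Rightarrow> bool" where
  "lex T v w \<longleftrightarrow> tle T v w \<or>
     (\<not> tle T v w \<and> \<not> tle T w v \<and>
      sib T (succ_toward T (meet T v w) v) (succ_toward T (meet T v w) w))"

definition subtree :: "('a, 'm) otree_scheme \<Rightarrow> 'a set \<Rightarrow> bool" where
  "subtree T U \<longleftrightarrow> U \<noteq> {} \<and> U \<subseteq> carrier T \<and>
     (\<forall>w\<in>U. \<forall>v\<in>carrier T. tle T v w \<longrightarrow> v \<in> U)"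

definition restrict_tree :: "('a, 'm) otree_scheme \<Rightarrow> 'a set \<Rightarrow> ('a, 'm) otree_scheme" where
  "restrict_tree T U = T\<lparr>carrier := U\<rparr>"

definition morphism :: "('a, 'm) otree_scheme \<Rightarrow> ('b, 'n) otree_scheme \<Rightarrow> ('a \<Rightarrow> 'b) \<Rightarrow> bool" where
  "morphism S T e \<longleftrightarrow>
     (\<forall>v\<in>carrier S. e v \<in> carrier T) \<and>
     (\<forall>v\<in>carrier S. \<forall>w\<in>carrier S. e (meet S v w) = meet T (e v) (e w)) \<and>
     (\<forall>v\<in>carrier S. \<forall>w\<in>carrier S. lex S v w \<longrightarrow> lex T (e v) (e w)) \<and>
     e (root S) = root T"

definition rigid_surj :: "('b, 'n) otree_scheme \<Rightarrow> ('a, 'm) otree_scheme \<Rightarrow> ('b \<Rightarrow> 'a) \<Rightarrow> bool" where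
  "rigid_surj T S f \<longleftrightarrow>
     (\<forall>w\<in>carrier T. f w \<in> carrier S) \<and>
     (\<exists>e. morphism S T e \<and> (\<forall>s\<in>carrier S. f (e s) = s) \<and>
          (\<forall>w\<in>carrier T. tle T (e (f w)) w))"

end

theory Submission
  imports Defs
begin

text \<open>Let \<open>e\<close> be a section of \<open>f\<close> witnessing rigidity. If \<open>v \<sqsubseteq> f w\<close> with \<open>w \<in> T'\<close>, then
  \<open>e v \<sqsubseteq> e (f w) \<sqsubseteq> w\<close> because morphisms preserve meets and hence \<open>\<sqsubseteq>\<close>; so \<open>e v \<in> T'\<close> and
  \<open>v = f (e v) \<in> f[T']\<close>. Likewise \<open>e (f w) \<sqsubseteq> w\<close> shows that \<open>e\<close> maps \<open>f[T']\<close> into \<open>T'\<close>, and since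
  root, meets and the lexicographic order of a subtree are those of the ambient tree, \<open>e\<close>
  restricts to a morphism witnessing that \<open>f\<close> restricted to \<open>T'\<close> is rigid.\<close>

lemma restrict_tree_simps [simp]:
  "carrier (restrict_tree T U) = U" "tle (restrict_tree T U) = tle T"
  "sib (restrict_tree T U) = sib T"
  by (simp_all add: restrict_tree_def)

lemma is_tree_refl: "is_tree T \<Longrightarrow> v \<in> carrier T \<Longrightarrow> tle T v v"
  unfolding is_tree_def by (elim conjE) (rule bspec)

lemma is_tree_antisym:
  "is_tree T \<Longrightarrow> u \<in> carrier T \<Longrightarrow> v \<in> carrier T \<Longrightarrow> tle T u v \<Longrightarrow> tle T v u \<Longrightarrow> u = v"
  unfolding is_tree_def by (elim conjE) meson

lemma is_tree_trans:
  "is_tree T \<Longrightarrow> u \<in> carrier T \<Longrightarrow> v \<in> carrier T \<Longrightarrow> w \<in> carrier T \<Longrightarrow>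
    tle T u v \<Longrightarrow> tle T v w \<Longrightarrow> tle T u w"
  unfolding is_tree_def by (elim conjE) meson

lemma is_tree_predecessors_linear:
  "is_tree T \<Longrightarrow> u \<in> carrier T \<Longrightarrow> v \<in> carrier T \<Longrightarrow> w \<in> carrier T \<Longrightarrow>
    tle T u w \<Longrightarrow> tle T v w \<Longrightarrow> tle T u v \<or> tle T v u"
  unfolding is_tree_def by (elim conjE) meson

lemma is_tree_finite: "is_tree T \<Longrightarrow> finite (carrier T)"
  unfolding is_tree_def by (elim conjE)

lemma root_least:
  assumes T: "is_tree T"
  shows "root T \<in> carrier T \<and> (\<forall>v\<in>carrier T. tle T (root T) v)"
proof -
  obtain r where r: "r \<in> carrier T" "\<forall>v\<in>carrier T. tle T r v"
    using T unfolding is_tree_def by (elim conjE) blast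
  have "root T = r"
    unfolding root_def using r is_tree_antisym[OF T] by (intro the_equality) auto
  with r show ?thesis by simp
qed

lemma finite_chain_has_greatest:
  assumes T: "is_tree T" and "finite C" "C \<noteq> {}" "C \<subseteq> carrier T"
    and chain: "\<forall>x\<in>C. \<forall>y\<in>C. tle T x y \<or> tle T y x"
  shows "\<exists>m\<in>C. \<forall>x\<in>C. tle T x m"
  using assms(2-5)
proof (induction C rule: finite_ne_induct)
  case (singleton x)
  then show ?case using is_tree_refl[OF T] by auto
next
  case (insert x C)
  then obtain m where m: "m \<in> C" "\<forall>y\<in>C. tle T y m" by auto
  have "tle T x m \<or> tle T m x" using insert.prems m(1) by blast
  then show ?case
  proof
    assume "tle T x m"
    then show ?thesis using m by auto
  next
    assume "tle T m x"
    moreover have "x \<in> carrier T" "C \<subseteq> carrier T" using insert.prems by auto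
    ultimately have "\<forall>y\<in>C. tle T y x"
      using m is_tree_trans[OF T, of _ m x] by blast
    then show ?thesis using is_tree_refl[OF T] insert.prems by auto
  qed
qed

lemma meet_exists:
  assumes T: "is_tree T" and v: "v \<in> carrier T" and w: "w \<in> carrier T"
  shows "\<exists>u\<in>carrier T. tle T u v \<and> tle T u w \<and>
      (\<forall>x\<in>carrier T. tle T x v \<and> tle T x w \<longrightarrow> tle T x u)"
proof -
  let ?P = "{u \<in> carrier T. tle T u v \<and> tle T u w}"
  have "finite ?P" using is_tree_finite[OF T] by simp
  moreover have "root T \<in> ?P" using root_least[OF T] v w by blast
  moreover have "\<forall>x\<in>?P. \<forall>y\<in>?P. tle T x y \<or> tle T y x"
    using is_tree_predecessors_linear[OF T _ _ v] by blast
  ultimately obtain m where "m \<in> ?P" "\<forall>x\<in>?P. tle T x m"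
    using finite_chain_has_greatest[OF T, of ?P] by blast
  then show ?thesis by blast
qed

lemma meet_eqI:
  assumes T: "is_tree T" and "u \<in> carrier T" "tle T u v" "tle T u w"
    and "\<forall>x\<in>carrier T. tle T x v \<and> tle T x w \<longrightarrow> tle T x u"
  shows "meet T v w = u"
  unfolding meet_def
proof (rule the_equality)
  fix u' assume "u' \<in> carrier T \<and> tle T u' v \<and> tle T u' w \<and>
      (\<forall>x\<in>carrier T. tle T x v \<and> tle T x w \<longrightarrow> tle T x u')"
  then show "u' = u" using assms is_tree_antisym[OF T, of u' u] by blast
qed (use assms in blast)

lemma meet_greatest_lower_bound:
  assumes T: "is_tree T" and "v \<in> carrier T" "w \<in> carrier T"
  shows "meet T v w \<in> carrier T \<and> tle T (meet T v w) v \<and> tle T (meet T v w) w \<and>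
      (\<forall>x\<in>carrier T. tle T x v \<and> tle T x w \<longrightarrow> tle T x (meet T v w))"
proof -
  obtain u where "u \<in> carrier T" "tle T u v" "tle T u w"
    "\<forall>x\<in>carrier T. tle T x v \<and> tle T x w \<longrightarrow> tle T x u"
    using meet_exists[OF assms] by blast
  moreover from this have "meet T v w = u" by (rule meet_eqI[OF T])
  ultimately show ?thesis by simp
qed

lemma subtree_subset: "subtree T U \<Longrightarrow> U \<subseteq> carrier T"
  unfolding subtree_def by blast

lemma subtree_downward_closed:
  "subtree T U \<Longrightarrow> w \<in> U \<Longrightarrow> v \<in> carrier T \<Longrightarrow> tle T v w \<Longrightarrow> v \<in> U"
  unfolding subtree_def by blast

lemma subtree_root:
  assumes "is_tree T" "subtree T U"
  shows "root T \<in> U"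
  using assms root_least unfolding subtree_def by blast

lemma is_tree_restrict_tree:
  assumes T: "is_tree T" and U: "subtree T U"
  shows "is_tree (restrict_tree T U)"
proof -
  have sub: "U \<subseteq> carrier T" using subtree_subset[OF U] .
  have r: "root T \<in> U" using subtree_root[OF T U] .
  show ?thesis unfolding is_tree_def restrict_tree_simps
  proof (intro conjI)
    show "finite U" using is_tree_finite[OF T] sub rev_finite_subset by blast
    show "U \<noteq> {}" using r by blast
    show "\<forall>v\<in>U. tle T v v" using is_tree_refl[OF T] sub by blast
    show "\<forall>u\<in>U. \<forall>v\<in>U. tle T u v \<and> tle T v u \<longrightarrow> u = v"
      using is_tree_antisym[OF T] sub by blast
    show "\<forall>u\<in>U. \<forall>v\<in>U. \<forall>w\<in>U. tle T u v \<and> tle T v w \<longrightarrow> tle T u w"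
      using is_tree_trans[OF T] sub by blast
    show "\<exists>r\<in>U. \<forall>v\<in>U. tle T r v" using r root_least[OF T] sub by blast
    show "\<forall>w\<in>U. \<forall>u\<in>U. \<forall>v\<in>U. tle T u w \<and> tle T v w \<longrightarrow> tle T u v \<or> tle T v u"
      using is_tree_predecessors_linear[OF T] sub by blast
  qed
qed

lemma root_restrict_tree:
  assumes T: "is_tree T" and U: "subtree T U"
  shows "root (restrict_tree T U) = root T"
  unfolding root_def[of "restrict_tree T U"] restrict_tree_simps
proof (rule the_equality)
  have r: "root T \<in> U" using subtree_root[OF T U] .
  then show "root T \<in> U \<and> (\<forall>v\<in>U. tle T (root T) v)"
    using root_least[OF T] subtree_subset[OF U] by blast
  fix x assume "x \<in> U \<and> (\<forall>v\<in>U. tle T x v)"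
  then show "x = root T"
    using r root_least[OF T] subtree_subset[OF U] is_tree_antisym[OF T, of x "root T"] by blast
qed

lemma meet_restrict_tree:
  assumes T: "is_tree T" and U: "subtree T U" and "v \<in> U" "w \<in> U"
  shows "meet (restrict_tree T U) v w = meet T v w"
proof -
  have vw: "v \<in> carrier T" "w \<in> carrier T" using assms(3,4) subtree_subset[OF U] by auto
  note m = meet_greatest_lower_bound[OF T vw]
  have "meet T v w \<in> U"
    using m subtree_downward_closed[OF U assms(3)] by blast
  then show ?thesis
    using m subtree_subset[OF U]
    by (intro meet_eqI[OF is_tree_restrict_tree[OF T U]]) auto
qed

lemma imm_succ_restrict_tree:
  assumes U: "subtree T U"
  shows "imm_succ (restrict_tree T U) m = imm_succ T m \<inter> U"
proof (intro equalityI subsetI)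
  fix c assume c: "c \<in> imm_succ (restrict_tree T U) m"
  then have cU: "c \<in> U" and mc: "tlt T m c"
    and no_between: "\<not> (\<exists>u\<in>U. tlt T m u \<and> tlt T u c)"
    unfolding imm_succ_def tlt_def by auto
  have "\<not> (\<exists>u\<in>carrier T. tlt T m u \<and> tlt T u c)"
    using no_between subtree_downward_closed[OF U cU] unfolding tlt_def by blast
  then show "c \<in> imm_succ T m \<inter> U"
    using cU mc subtree_subset[OF U] unfolding imm_succ_def by blast
next
  fix c assume "c \<in> imm_succ T m \<inter> U"
  then show "c \<in> imm_succ (restrict_tree T U) m"
    using subtree_subset[OF U] unfolding imm_succ_def tlt_def by auto
qed

lemma succ_toward_restrict_tree:
  assumes U: "subtree T U" and v: "v \<in> U"
  shows "succ_toward (restrict_tree T U) m v = succ_toward T m v"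
proof -
  have "c \<in> U" if "c \<in> imm_succ T m" "tle T c v" for c
    using that subtree_downward_closed[OF U v] unfolding imm_succ_def by blast
  then have "(c \<in> imm_succ T m \<inter> U \<and> tle T c v) = (c \<in> imm_succ T m \<and> tle T c v)" for c
    by blast
  then show ?thesis
    unfolding succ_toward_def imm_succ_restrict_tree[OF U] by simp
qed

lemma lex_restrict_tree:
  assumes T: "is_tree T" and U: "subtree T U" and v: "v \<in> U" and w: "w \<in> U"
  shows "lex (restrict_tree T U) v w = lex T v w"
  unfolding lex_def using meet_restrict_tree[OF assms] succ_toward_restrict_tree[OF U v]
    succ_toward_restrict_tree[OF U w] by simp

lemma morphism_tle:
  assumes S: "is_tree S" and T: "is_tree T" and e: "morphism S T e"
    and v: "v \<in> carrier S" and w: "w \<in> carrier S" and vw: "tle S v w"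
  shows "tle T (e v) (e w)"
proof -
  have "meet S v w = v" using S v w vw by (intro meet_eqI) (auto intro: is_tree_refl)
  then have "e v = meet T (e v) (e w)" using e v w unfolding morphism_def by metis
  then show ?thesis
    using meet_greatest_lower_bound[OF T, of "e v" "e w"] e v w unfolding morphism_def by metis
qed

lemma morphism_restrict_tree:
  assumes S: "is_tree S" and T: "is_tree T" and e: "morphism S T e"
    and U: "subtree S U" and V: "subtree T V" and eUV: "e ` U \<subseteq> V"
  shows "morphism (restrict_tree S U) (restrict_tree T V) e"
  unfolding morphism_def restrict_tree_simps
proof (intro conjI ballI impI)
  fix v w assume v: "v \<in> U" and w: "w \<in> U"
  have vw: "v \<in> carrier S" "w \<in> carrier S" "e v \<in> V" "e w \<in> V"
    using v w eUV subtree_subset[OF U] by auto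
  show "e (meet (restrict_tree S U) v w) = meet (restrict_tree T V) (e v) (e w)"
    using meet_restrict_tree[OF S U v w] meet_restrict_tree[OF T V vw(3,4)] e vw(1,2)
    unfolding morphism_def by metis
  show "lex (restrict_tree S U) v w \<Longrightarrow> lex (restrict_tree T V) (e v) (e w)"
    using lex_restrict_tree[OF S U v w] lex_restrict_tree[OF T V vw(3,4)] e vw(1,2)
    unfolding morphism_def by metis
qed (use eUV e root_restrict_tree[OF S U] root_restrict_tree[OF T V] in
      \<open>auto simp: morphism_def\<close>)

lemma rigid_surj_section:
  assumes "rigid_surj T S f"
  obtains e where "morphism S T e" "\<forall>s\<in>carrier S. f (e s) = s"
    "\<forall>w\<in>carrier T. tle T (e (f w)) w"
  using assms unfolding rigid_surj_def by blast

lemma rigid_surj_section_below: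
  assumes S: "is_tree S" and T: "is_tree T" and f: "rigid_surj T S f"
    and e: "morphism S T e" and ef: "\<forall>w\<in>carrier T. tle T (e (f w)) w"
    and w: "w \<in> carrier T" and v: "v \<in> carrier S" and vw: "tle S v (f w)"
  shows "tle T (e v) w"
proof -
  have fw: "f w \<in> carrier S" using f w unfolding rigid_surj_def by blast
  have "e v \<in> carrier T" "e (f w) \<in> carrier T" using e v fw unfolding morphism_def by auto
  then show ?thesis
    using is_tree_trans[OF T] morphism_tle[OF S T e v fw vw] ef w by blast
qed

lemma rigid_surj_image_subtree:
  assumes S: "is_tree S" and T: "is_tree T" and f: "rigid_surj T S f"
    and U: "subtree T U"
  shows "subtree S (f ` U)"
proof -
  obtain e where e: "morphism S T e" and fe: "\<forall>s\<in>carrier S. f (e s) = s"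
    and ef: "\<forall>w\<in>carrier T. tle T (e (f w)) w"
    using rigid_surj_section[OF f] .
  have "v \<in> f ` U" if w: "w \<in> U" and v: "v \<in> carrier S" and vw: "tle S v (f w)" for v w
  proof -
    have "tle T (e v) w"
      using rigid_surj_section_below[OF S T f e ef _ v vw] subtree_subset[OF U] w by blast
    then have "e v \<in> U"
      using subtree_downward_closed[OF U w] e v unfolding morphism_def by blast
    then show ?thesis using fe v by (metis imageI)
  qed
  then show ?thesis
    using U f subtree_subset[OF U] unfolding subtree_def rigid_surj_def by blast
qed

lemma rigid_surj_restrict_tree:
  assumes S: "is_tree S" and T: "is_tree T" and f: "rigid_surj T S f"
    and U: "subtree T U"
  shows "rigid_surj (restrict_tree T U) (restrict_tree S (f ` U)) f"
proof -
  obtain e where e: "morphism S T e" and fe: "\<forall>s\<in>carrier S. f (e s) = s"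
    and ef: "\<forall>w\<in>carrier T. tle T (e (f w)) w"
    using rigid_surj_section[OF f] .
  have fU: "subtree S (f ` U)" using rigid_surj_image_subtree[OF S T f U] .
  have "e ` f ` U \<subseteq> U"
    using ef subtree_subset[OF U] subtree_downward_closed[OF U] e f
    unfolding morphism_def rigid_surj_def by blast
  then have "morphism (restrict_tree S (f ` U)) (restrict_tree T U) e"
    using morphism_restrict_tree[OF S T e fU U] by blast
  moreover have "\<forall>s\<in>f ` U. f (e s) = s" "\<forall>w\<in>U. tle T (e (f w)) w"
    using fe ef subtree_subset[OF U] subtree_subset[OF fU] by auto
  ultimately show ?thesis
    unfolding rigid_surj_def by auto
qed

theorem lemma4p1:
  fixes S :: "('a, 'm) otree_scheme" and T :: "('b, 'n) otree_scheme"
    and f :: "'b \<Rightarrow> 'a" and T' :: "'b set"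
  assumes "is_ordered_tree S" and "is_ordered_tree T"
    and "rigid_surj T S f"
    and "subtree T T'"
  shows "subtree S (f ` T') \<and>
         rigid_surj (restrict_tree T T') (restrict_tree S (f ` T')) f"
proof -
  have "is_tree S" "is_tree T" using assms(1,2) unfolding is_ordered_tree_def by auto
  with assms(3,4) show ?thesis
    using rigid_surj_image_subtree rigid_surj_restrict_tree by blast
qed

end
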